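(* Let $\tau_1>0$ and let $\pi^u_{ij}$ be the marginal density of $\sigma_{ij}$ when $\sigma_{ij}\mid\rho_{ij}\sim N\big(0,\frac{\rho_{ij}}{1-\rho_{ij}}\tau_1^2\big)$ and $\rho_{ij}\sim\mathrm{Beta}(a,b)$, i.e. $\pi^u_{ij}(x)=\int_0^1 N\big(x\mid0,\frac{\rho}{1-\rho}\tau_1^2\big)\,\mathrm{Beta}(\rho\mid a,b)\,d\rho$. If $a=b=1/2$ and $\tau_1^2\asymp1/(np^4\tau^2)$, then for all sufficiently large $n$, $$\pi^u_{ij}(x)\ge\sqrt{\frac{1}{2\pi^3}}\,\frac{\tau_1}{x^2}\qquad\text{for all }x>1.$$
   Context: Here $n$ is the sample size, $p=p_n\to\infty$, $\tau\ge 1$, and $\tau_1=\tau_{1,n}$ depends on $n$; $a_n\asymp b_n$ means $a_n/b_n$ is bounded above and away from zero. *)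

theory Defs
  imports "HOL-Probability.Probability" "HOL-Library.Landau_Symbols"
begin

definition beta_density :: "real \<Rightarrow> real \<Rightarrow> real \<Rightarrow> real" where
  "beta_density a b r = r powr (a - 1) * (1 - r) powr (b - 1) / Beta a b"

text \<open>Marginal density of sigma when sigma | rho ~ N(0, rho/(1-rho) * t^2), rho ~ Beta(a,b).
  normal_density takes the standard deviation as second argument.\<close>
definition marginal_density :: "real \<Rightarrow> real \<Rightarrow> real \<Rightarrow> real \<Rightarrow> real" where
  "marginal_density a b t x =
     (LBINT r=0..1. normal_density 0 (sqrt (r / (1 - r) * t\<^sup>2)) x * beta_density a b r)"

end

(*
  For a = b = 1/2 the Beta density is 1 / (pi sqrt (r (1 - r))), and the mixture integrand
  collapses to K / t * exp (- c (1 - r) / r) / r with K = sqrt (1 / (2 pi^3)) and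
  c = x^2 / (2 t^2). On (3/4, 1) it dominates exp (- 4/3 c (1 - r)), whose integral is
  3 (1 - exp (- c / 3)) / (4 c) >= 1 / (2 c) = t^2 / x^2 once c >= 6. For x > 1 this holds as
  soon as t^2 <= 1/12, which is eventually the case because t^2 = O(1 / (n p^4 tau^2)) -> 0.
*)
theory Submission
  imports Defs
begin

lemma bigo_tendsto_0:
  fixes f g :: "'a \<Rightarrow> real"
  assumes "f \<in> O[F](g)" "(g \<longlongrightarrow> 0) F"
  shows "(f \<longlongrightarrow> 0) F"
proof -
  have "g \<in> o[F](\<lambda>_. 1)"
    using assms(2) by (intro smalloI_tendsto) auto
  with assms(1) have "f \<in> o[F](\<lambda>_. 1)"
    by (rule landau_o.big_small_trans)
  then show ?thesis
    using smalloD_tendsto by fastforce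
qed

lemma inverse_n_p4_tau2_tendsto_0:
  fixes p :: "nat \<Rightarrow> nat" and \<tau> :: real
  assumes "\<tau> \<noteq> 0" and "filterlim p at_top sequentially"
  shows "((\<lambda>n. 1 / (real n * real (p n) ^ 4 * \<tau>\<^sup>2)) \<longlongrightarrow> 0) sequentially"
proof -
  have "filterlim (\<lambda>n. real (p n) ^ 4) at_top sequentially"
    using filterlim_compose[OF filterlim_pow_at_top[OF _ filterlim_real_sequentially] assms(2)]
    by simp
  then have "filterlim (\<lambda>n. real n * real (p n) ^ 4 * \<tau>\<^sup>2) at_top sequentially"
    using assms(1)
    by (intro filterlim_at_top_mult_tendsto_pos[OF tendsto_const]
        filterlim_at_top_mult_at_top filterlim_real_sequentially) auto
  then show ?thesis
    unfolding inverse_eq_divide[symmetric] by (rule tendsto_inverse_0_at_top)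
qed

lemma set_integral_mono_subset:
  fixes f :: "'a \<Rightarrow> real"
  assumes "set_integrable M A f" "B \<in> sets M" "B \<subseteq> A" "\<And>x. x \<in> A \<Longrightarrow> 0 \<le> f x"
  shows "(LINT x:B|M. f x) \<le> (LINT x:A|M. f x)"
  unfolding set_lebesgue_integral_def
proof (rule integral_mono)
  show "integrable M (\<lambda>x. indicator B x *\<^sub>R f x)"
    using set_integrable_subset[OF assms(1-3)] by (simp add: set_integrable_def)
qed (use assms in \<open>auto simp: set_integrable_def indicator_def\<close>)

lemma set_integral_exp_one_minus:
  fixes k a :: real
  assumes "k \<noteq> 0" "a \<le> 1"
  shows "(LINT r:{a<..<1}|lborel. exp (- k * (1 - r))) = (1 - exp (- k * (1 - a))) / k"
proof -
  define F where "F r = exp (- k * (1 - r)) / k" for r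
  have "(LBINT r=ereal a..ereal 1. exp (- k * (1 - r))) = F 1 - F a"
    using assms unfolding F_def
    by (intro interval_integral_FTC_finite continuous_intros)
       (auto intro!: derivative_eq_intros simp flip: has_real_derivative_iff_has_vector_derivative)
  then show ?thesis
    using assms by (simp add: F_def interval_lebesgue_integral_def diff_divide_distrib)
qed

lemma exp_div_le_one:
  fixes c r :: real
  assumes "1 \<le> c" "0 < r" "r < 1"
  shows "exp (- c * (1 - r) / r) / r \<le> 1"
proof -
  define y where "y = c * (1 - r) / r"
  have "y \<ge> 0"
    using assms by (simp add: y_def)
  have "1 - r \<le> c * (1 - r)"
    using assms mult_right_mono[of 1 c "1 - r"] by simp
  then have denom: "1 \<le> r + c * (1 - r)"
    by linarith
  have "1 + y \<le> exp y"
    by (rule exp_ge_add_one_self)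
  then have "exp (- y) \<le> 1 / (1 + y)"
    using \<open>y \<ge> 0\<close> by (simp add: exp_minus field_simps)
  also have "\<dots> = r / (r + c * (1 - r))"
    using assms by (simp add: y_def field_simps)
  also have "\<dots> \<le> r / 1"
    using assms denom by (intro divide_left_mono) auto
  finally have "exp (- y) \<le> r"
    by simp
  then show ?thesis
    using assms by (simp add: y_def divide_le_eq_1)
qed

lemma exp_linear_le_exp_div:
  fixes c r :: real
  assumes "0 \<le> c" "3/4 \<le> r" "r \<le> 1"
  shows "exp (- (4/3 * c) * (1 - r)) \<le> exp (- c * (1 - r) / r) / r"
proof -
  have "c * (1 - r) * (1 / r) \<le> c * (1 - r) * (4/3)"
    using assms by (intro mult_left_mono) (auto simp: field_simps mult_left_le)
  then have "exp (- (4/3 * c) * (1 - r)) \<le> exp (- c * (1 - r) / r)"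
    by simp
  also have "\<dots> \<le> exp (- c * (1 - r) / r) / r"
    using assms by (simp add: le_divide_eq mult_left_le)
  finally show ?thesis .
qed

lemma interval_integral_exp_div_ge:
  fixes c :: real
  assumes "6 \<le> c"
  shows "1 / (2 * c) \<le> (LBINT r=0..1. exp (- c * (1 - r) / r) / r)"
proof -
  let ?h = "\<lambda>r. exp (- c * (1 - r) / r) / r"
  let ?g = "\<lambda>r. exp (- (4/3 * c) * (1 - r))"
  have h_nonneg: "0 \<le> ?h r" if "0 < r" for r
    using that by simp
  have h_int: "set_integrable lborel {0<..<1} ?h"
    unfolding set_integrable_def
    by (rule integrableI_bounded_set_indicator[where B = 1])
       (use assms exp_div_le_one[of c] in \<open>auto intro!: AE_I2 simp del: minus_mult_left\<close>)
  have g_int: "set_integrable lborel {3/4<..<1} ?g"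
    by (rule set_integrable_subset[OF borel_integrable_atLeastAtMost'[of "3/4" 1]])
       (auto intro!: continuous_intros)
  have "3 \<le> 1 + c / 3"
    using assms by simp
  also have "\<dots> \<le> exp (c / 3)"
    by (rule exp_ge_add_one_self)
  finally have "exp (- c / 3) \<le> 1 / 3"
    by (simp add: exp_minus field_simps)
  then have "1 / (2 * c) \<le> (1 - exp (- c / 3)) / (4/3 * c)"
    using assms by (simp add: field_simps)
  also have "\<dots> = (LINT r:{3/4<..<1}|lborel. ?g r)"
    using assms by (subst set_integral_exp_one_minus) auto
  also have "\<dots> \<le> (LINT r:{3/4<..<1}|lborel. ?h r)"
    using assms
    by (intro set_integral_mono g_int set_integrable_subset[OF h_int] exp_linear_le_exp_div) auto
  also have "\<dots> \<le> (LINT r:{0<..<1}|lborel. ?h r)"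
    by (rule set_integral_mono_subset[OF h_int]) (auto intro: h_nonneg)
  also have "\<dots> = (LBINT r=0..1. ?h r)"
    by (simp add: interval_lebesgue_integral_def einterval_iff zero_ereal_def one_ereal_def)
  finally show ?thesis .
qed

lemma Beta_half_half: "Beta (1/2) (1/2) = (pi::real)"
  by (simp add: Beta_def Gamma_one_half_real)

lemma normal_beta_half_integrand:
  fixes t x r :: real
  assumes t: "t > 0" and r: "0 < r" "r < 1"
  shows "normal_density 0 (sqrt (r / (1 - r) * t\<^sup>2)) x * beta_density (1/2) (1/2) r
       = sqrt (1 / (2 * pi ^ 3)) / t * (exp (- (x\<^sup>2 / (2 * t\<^sup>2)) * (1 - r) / r) / r)"
proof -
  have variance: "(sqrt (r / (1 - r) * t\<^sup>2))\<^sup>2 = r / (1 - r) * t\<^sup>2"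
    using r by simp
  have beta_powrs: "r powr (1/2 - 1) = 1 / sqrt r" "(1 - r) powr (1/2 - 1) = 1 / sqrt (1 - r)"
    using r by (simp_all add: powr_minus_divide powr_half_sqrt[symmetric] powr_minus)
  have exponent: "- (x - 0)\<^sup>2 / (2 * (r / (1 - r) * t\<^sup>2)) = - (x\<^sup>2 / (2 * t\<^sup>2)) * (1 - r) / r"
    using r t by (simp add: field_simps)
  have "sqrt (2 * pi * (r / (1 - r) * t\<^sup>2)) * sqrt r * sqrt (1 - r)
      = sqrt (2 * pi * (r / (1 - r) * t\<^sup>2) * r * (1 - r))"
    by (metis real_sqrt_mult)
  also have "2 * pi * (r / (1 - r) * t\<^sup>2) * r * (1 - r) = (2 * pi) * (t * r)\<^sup>2"
    using r by (simp add: field_simps power2_eq_square)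
  finally have normalizer: "sqrt (2 * pi * (r / (1 - r) * t\<^sup>2)) * sqrt r * sqrt (1 - r) = sqrt (2 * pi) * t * r"
    using t r by (simp add: real_sqrt_mult)
  have "1 / (2 * pi ^ 3) = (1 / (pi * sqrt (2 * pi)))\<^sup>2"
    by (simp add: power2_eq_square power3_eq_cube field_simps)
  then have coefficient: "sqrt (1 / (2 * pi ^ 3)) = 1 / (pi * sqrt (2 * pi))"
    by simp
  show ?thesis
    unfolding normal_density_def beta_density_def variance beta_powrs exponent coefficient Beta_half_half
    using normalizer r t by (simp add: field_simps)
qed

lemma marginal_density_half_ge:
  fixes t x :: real
  assumes "t > 0" "12 * t\<^sup>2 \<le> x\<^sup>2"
  shows "sqrt (1 / (2 * pi ^ 3)) * t / x\<^sup>2 \<le> marginal_density (1/2) (1/2) t x"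
proof -
  define K where "K = sqrt (1 / (2 * pi ^ 3))"
  define c where "c = x\<^sup>2 / (2 * t\<^sup>2)"
  have "6 \<le> c"
    using assms by (simp add: c_def field_simps)
  have integrand: "normal_density 0 (sqrt (r / (1 - r) * t\<^sup>2)) x * beta_density (1/2) (1/2) r
      = K / t * (exp (- c * (1 - r) / r) / r)" if "0 < r" "r < 1" for r
    unfolding K_def c_def using assms(1) that by (rule normal_beta_half_integrand)
  have "K * t / x\<^sup>2 = K / t * (1 / (2 * c))"
    using assms by (simp add: c_def field_simps power2_eq_square)
  also have "\<dots> \<le> K / t * (LBINT r=0..1. exp (- c * (1 - r) / r) / r)"
    using \<open>6 \<le> c\<close> assms by (intro mult_left_mono interval_integral_exp_div_ge) (auto simp: K_def)
  also have "\<dots> = marginal_density (1/2) (1/2) t x"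
    unfolding marginal_density_def interval_lebesgue_integral_mult_right[symmetric]
    by (rule interval_integral_cong, subst integrand) (auto simp: einterval_iff)
  finally show ?thesis
    by (simp add: K_def)
qed

theorem lemma4:
  fixes \<tau>1 :: "nat \<Rightarrow> real" and p :: "nat \<Rightarrow> nat" and \<tau> :: real
  assumes "\<tau> \<ge> 1"
    and "filterlim p at_top sequentially"
    and "\<forall>n. \<tau>1 n > 0"
    and "(\<lambda>n. (\<tau>1 n)\<^sup>2) \<in> \<Theta>(\<lambda>n. 1 / (real n * real (p n) ^ 4 * \<tau>\<^sup>2))"
  shows "\<forall>\<^sub>F n in sequentially. \<forall>x::real. x > 1 \<longrightarrow>
           marginal_density (1/2) (1/2) (\<tau>1 n) x \<ge> sqrt (1 / (2 * pi ^ 3)) * \<tau>1 n / x\<^sup>2"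
proof -
  have "(\<lambda>n. 1 / (real n * real (p n) ^ 4 * \<tau>\<^sup>2)) \<longlonglongrightarrow> 0"
    using assms(1,2) by (intro inverse_n_p4_tau2_tendsto_0) auto
  with bigthetaD1[OF assms(4)] have "(\<lambda>n. (\<tau>1 n)\<^sup>2) \<longlonglongrightarrow> 0"
    by (rule bigo_tendsto_0)
  then have "\<forall>\<^sub>F n in sequentially. (\<tau>1 n)\<^sup>2 < 1/12"
    by (rule order_tendstoD) simp
  then show ?thesis
  proof (rule eventually_mono, intro allI impI)
    fix n and x :: real
    assume "(\<tau>1 n)\<^sup>2 < 1/12" and "x > 1"
    moreover have "1 < x\<^sup>2"
      using \<open>x > 1\<close> by (simp add: one_less_power)
    ultimately have "12 * (\<tau>1 n)\<^sup>2 \<le> x\<^sup>2"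
      by linarith
    with assms(3) show "sqrt (1 / (2 * pi ^ 3)) * \<tau>1 n / x\<^sup>2 \<le> marginal_density (1/2) (1/2) (\<tau>1 n) x"
      by (intro marginal_density_half_ge) auto
  qed
qed

end
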